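(* For any monoid $M$, $\mathfrak{L}(\mathrm{Val},\mathrm{PDA},M)=\mathfrak{L}(\mathrm{Val},\mathrm{NFA},\mathrm{P}_2\times M)$.
   Context: A pushdown automaton is $(Q,\Sigma,\Gamma,\delta,q_0,Q_a)$ with finite states $Q$, input alphabet $\Sigma$, stack alphabet $\Gamma$, initial state $q_0$, accept states $Q_a$, and $\delta: Q\times\Sigma_\varepsilon\times\Gamma_\varepsilon\to\mathbb{P}(Q\times\Gamma_\varepsilon)$ (with $X_\varepsilon=X\cup\{\varepsilon\}$; a transition reads an input letter or nothing, pops a symbol or nothing, pushes a symbol or nothing). A valence PDA over $M$ assigns to each transition an element of $M$ (its valence); the valence of a computation is the product of the valences of its transitions in order, and a word is accepted if there is an accepting computation for it whose valence is the identity of $M$ (accepting computations being those of the underlying PDA, ending in an accept state with empty stack). $\mathfrak{L}(\mathrm{Val},\mathrm{PDA},M)$ is the family of languages so accepted. A valence automaton over a monoid $N$ is a nondeterministic finite automaton with $\varepsilon$-moves in which each transition carries a valence in $N$, accepting a word if some computation reading it from the initial state to an accept state has valence product equal to the identity; $\mathfrak{L}(\mathrm{Val},\mathrm{NFA},N)$ is the family of such languages. For a finite alphabet $X$, the polycyclic monoid $P(X)$ is the monoid of partial functions on $X^*$ generated by $P_x:u\mapsto ux$ and $Q_x: ux\mapsto u$ (defined only on $X^*x$), $x\in X$; $\mathrm{P}_2$ is the polycyclic monoid on a two-letter alphabet. *)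

theory Defs
  imports Main
begin

text \<open>States and stack symbols are taken from nat (every finite set embeds into nat).
A transition (p, a, g, q, h) reads a or nothing (None), pops g or nothing,
moves to q and pushes h or nothing. The stack is a list with its top at the head.\<close>

type_synonym 'a pda_trans = "nat \<times> 'a option \<times> nat option \<times> nat \<times> nat option"

record ('a, 'm) vpda =
  pda_states :: "nat set"
  pda_delta  :: "'a pda_trans set"
  pda_val    :: "'a pda_trans \<Rightarrow> 'm"
  pda_init   :: nat
  pda_acc    :: "nat set"

definition opt_list :: "'b option \<Rightarrow> 'b list" where
  "opt_list x = (case x of None \<Rightarrow> [] | Some y \<Rightarrow> [y])"

definition vpda_wf :: "('a, 'm) vpda \<Rightarrow> bool" where
  "vpda_wf A \<longleftrightarrow> finite (pda_states A) \<and> finite (pda_delta A)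
     \<and> pda_init A \<in> pda_states A \<and> pda_acc A \<subseteq> pda_states A
     \<and> (\<forall>(p, a, g, q, h) \<in> pda_delta A. p \<in> pda_states A \<and> q \<in> pda_states A)"

inductive pda_run :: "('a, 'm::monoid_mult) vpda \<Rightarrow> nat \<times> nat list \<Rightarrow> 'a list \<Rightarrow> 'm
                       \<Rightarrow> nat \<times> nat list \<Rightarrow> bool" for A where
  pda_refl: "pda_run A c [] 1 c"
| pda_step: "\<lbrakk> (p, a, g, q, h) \<in> pda_delta A;
               pda_run A (q, opt_list h @ r) w m c \<rbrakk>
             \<Longrightarrow> pda_run A (p, opt_list g @ r) (opt_list a @ w)
                    (pda_val A (p, a, g, q, h) * m) c"

definition vpda_lang :: "('a, 'm::monoid_mult) vpda \<Rightarrow> 'a list set" where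
  "vpda_lang A = {w. \<exists>q. q \<in> pda_acc A \<and> pda_run A (pda_init A, []) w 1 (q, [])}"

text \<open>The family L(Val, PDA, M), restricted to languages over the (arbitrary) letter type 'a.\<close>

definition vpda_langs :: "'m::monoid_mult itself \<Rightarrow> 'a list set set" where
  "vpda_langs (_ :: 'm itself) =
     {L. \<exists>A :: ('a, 'm) vpda. vpda_wf A \<and> L = vpda_lang A}"

type_synonym 'a nfa_trans = "nat \<times> 'a option \<times> nat"

record ('a, 'n) vnfa =
  nfa_states :: "nat set"
  nfa_delta  :: "'a nfa_trans set"
  nfa_val    :: "'a nfa_trans \<Rightarrow> 'n"
  nfa_init   :: nat
  nfa_acc    :: "nat set"

definition vnfa_wf :: "'n set \<Rightarrow> ('a, 'n) vnfa \<Rightarrow> bool" where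
  "vnfa_wf N A \<longleftrightarrow> finite (nfa_states A) \<and> finite (nfa_delta A)
     \<and> nfa_init A \<in> nfa_states A \<and> nfa_acc A \<subseteq> nfa_states A
     \<and> (\<forall>(p, a, q) \<in> nfa_delta A. p \<in> nfa_states A \<and> q \<in> nfa_states A)
     \<and> (\<forall>t \<in> nfa_delta A. nfa_val A t \<in> N)"

inductive nfa_run :: "('n \<Rightarrow> 'n \<Rightarrow> 'n) \<Rightarrow> 'n \<Rightarrow> ('a, 'n) vnfa
                       \<Rightarrow> nat \<Rightarrow> 'a list \<Rightarrow> 'n \<Rightarrow> nat \<Rightarrow> bool" for mult one A where
  nfa_refl: "nfa_run mult one A p [] one p"
| nfa_step: "\<lbrakk> (p, a, q) \<in> nfa_delta A; nfa_run mult one A q w m r \<rbrakk>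
             \<Longrightarrow> nfa_run mult one A p (opt_list a @ w) (mult (nfa_val A (p, a, q)) m) r"

definition vnfa_lang :: "('n \<Rightarrow> 'n \<Rightarrow> 'n) \<Rightarrow> 'n \<Rightarrow> ('a, 'n) vnfa \<Rightarrow> 'a list set" where
  "vnfa_lang mult one A =
     {w. \<exists>q. q \<in> nfa_acc A \<and> nfa_run mult one A (nfa_init A) w one q}"

text \<open>The family L(Val, NFA, N) for the monoid (N, mult, one), over letter type 'a.\<close>

definition vnfa_langs :: "'n set \<Rightarrow> ('n \<Rightarrow> 'n \<Rightarrow> 'n) \<Rightarrow> 'n \<Rightarrow> 'a list set set" where
  "vnfa_langs N mult one =
     {L. \<exists>A :: ('a, 'n) vnfa. vnfa_wf N A \<and> L = vnfa_lang mult one A}"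

text \<open>Partial functions on X* with X = bool (a two-letter alphabet).
Product in the monoid: f \<cdot> g = "first f, then g", identity = Some.\<close>

type_synonym pfun = "bool list \<Rightarrow> bool list option"

definition pmul :: "pfun \<Rightarrow> pfun \<Rightarrow> pfun" where
  "pmul f g = g \<circ>\<^sub>m f"

definition Pgen :: "bool \<Rightarrow> pfun" where
  "Pgen x = (\<lambda>u. Some (u @ [x]))"

definition Qgen :: "bool \<Rightarrow> pfun" where
  "Qgen x = (\<lambda>u. if u \<noteq> [] \<and> last u = x then Some (butlast u) else None)"

inductive_set P2 :: "pfun set" where
  P2_one: "Some \<in> P2"
| P2_P: "f \<in> P2 \<Longrightarrow> pmul f (Pgen x) \<in> P2"
| P2_Q: "f \<in> P2 \<Longrightarrow> pmul f (Qgen x) \<in> P2"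

definition prodmul :: "pfun \<times> 'm::monoid_mult \<Rightarrow> pfun \<times> 'm \<Rightarrow> pfun \<times> 'm" where
  "prodmul x y = (pmul (fst x) (fst y), snd x * snd y)"

end

theory Submission
  imports Defs "HOL-Library.Nat_Bijection"
begin

text \<open>Every element of P_2 is a word in the generators P_x (push the bit x) and Q_x (pop the
bit x), and it acts on bit strings by editing their right end only, so it is the identity
as soon as it maps the empty word to itself. Hence a valence automaton over P_2 \<times> M is a
pushdown automaton over a two-letter stack alphabet in disguise: expanding each transition
into a chain of single pushes and pops gives a valence PDA over M. Conversely, a valence PDA
over M becomes a valence automaton over P_2 \<times> M by coding the stack symbol n as the
prefix-free bit string 0 1^n and letting the P_2-component of each transition pop the code
of the symbol it pops and push the code of the symbol it pushes; an accepting computation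
ends with an empty stack exactly when its P_2-valence maps the empty word to itself.\<close>

section \<open>The polycyclic monoid\<close>

lemma pmul_apply: "pmul f g x = (case f x of None \<Rightarrow> None | Some y \<Rightarrow> g y)"
  by (simp add: pmul_def map_comp_def)

lemma pmul_eq_Some_iff: "pmul f g x = Some y \<longleftrightarrow> (\<exists>z. f x = Some z \<and> g z = Some y)"
  by (simp add: pmul_apply split: option.splits)

lemma pmul_assoc: "pmul (pmul f g) h = pmul f (pmul g h)"
  by (rule ext) (simp add: pmul_apply split: option.splits)

lemma pmul_Some_left [simp]: "pmul Some f = f"
  by (rule ext) (simp add: pmul_apply)

lemma pmul_Some_right [simp]: "pmul f Some = f"
  by (rule ext) (simp add: pmul_apply split: option.splits)

lemma Qgen_eq_Some_iff: "Qgen b y = Some z \<longleftrightarrow> y = z @ [b]"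
  by (auto simp: Qgen_def) (metis append_butlast_last_id)+

definition polygen :: "bool \<times> bool \<Rightarrow> pfun" where
  "polygen g = (if fst g then Pgen (snd g) else Qgen (snd g))"

fun polyword :: "(bool \<times> bool) list \<Rightarrow> pfun" where
  "polyword [] = Some"
| "polyword (g # gs) = pmul (polygen g) (polyword gs)"

lemma polyword_append: "polyword (gs @ hs) = pmul (polyword gs) (polyword hs)"
  by (induction gs) (auto simp: pmul_assoc)

lemma polyword_in_P2: "polyword gs \<in> P2"
proof (induction gs rule: rev_induct)
  case Nil
  then show ?case by (simp add: P2_one)
next
  case (snoc g gs)
  then show ?case
    by (cases g) (auto simp: polyword_append polygen_def intro: P2_P P2_Q)
qed

lemma P2_imp_polyword: "f \<in> P2 \<Longrightarrow> \<exists>gs. f = polyword gs"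
proof (induction rule: P2.induct)
  case P2_one
  show ?case by (rule exI[of _ "[]"]) simp
next
  case (P2_P f x)
  then obtain gs where "f = polyword gs" by blast
  then show ?case by (intro exI[of _ "gs @ [(True, x)]"]) (simp add: polyword_append polygen_def)
next
  case (P2_Q f x)
  then obtain gs where "f = polyword gs" by blast
  then show ?case by (intro exI[of _ "gs @ [(False, x)]"]) (simp add: polyword_append polygen_def)
qed

lemma P2_pmul_closed: "f \<in> P2 \<Longrightarrow> g \<in> P2 \<Longrightarrow> pmul f g \<in> P2"
  by (metis P2_imp_polyword polyword_in_P2 polyword_append)

lemma P2_append_left: "f \<in> P2 \<Longrightarrow> f x = Some y \<Longrightarrow> f (w @ x) = Some (w @ y)"
proof (induction arbitrary: x y rule: P2.induct)
  case P2_one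
  then show ?case by simp
next
  case (P2_P f b)
  then show ?case by (auto simp: pmul_eq_Some_iff Pgen_def)
next
  case (P2_Q f b)
  then show ?case by (auto simp: pmul_eq_Some_iff Qgen_eq_Some_iff)
qed

lemma P2_eq_Some_if_Nil: "f \<in> P2 \<Longrightarrow> f [] = Some [] \<Longrightarrow> f = Some"
  by (rule ext) (metis P2_append_left append_Nil2)

lemma polyword_push: "polyword (map (Pair True) v) u = Some (u @ v)"
  by (induction v arbitrary: u) (auto simp: pmul_apply polygen_def Pgen_def)

lemma polyword_pop_eq_Some_iff: "polyword (map (Pair False) (rev v)) x = Some z \<longleftrightarrow> x = z @ v"
proof (induction v arbitrary: x z)
  case Nil
  then show ?case by simp
next
  case (Cons b v)
  have "polyword (map (Pair False) (rev (b # v))) = pmul (polyword (map (Pair False) (rev v))) (Qgen b)"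
    by (simp add: polyword_append polygen_def)
  then show ?case
    by (auto simp: pmul_eq_Some_iff Cons Qgen_eq_Some_iff)
qed

lemma nfa_run_valence_in_P2:
  assumes "vnfa_wf (P2 \<times> UNIV) A" and "nfa_run prodmul (Some, 1) A p w v q"
  shows "fst v \<in> P2"
  using assms(2)
proof (induction rule: nfa_run.induct)
  case (nfa_step p a q w m r)
  then have "fst (nfa_val A (p, a, q)) \<in> P2"
    using assms(1) by (auto simp: vnfa_wf_def)
  with nfa_step.IH show ?case by (simp add: prodmul_def P2_pmul_closed)
qed (simp add: P2_one)

lemma pda_run_stepI:
  "(p, a, g, q, h) \<in> pda_delta A \<Longrightarrow> pda_run A (q, s') w m c \<Longrightarrow>
   s' = opt_list h @ r \<Longrightarrow> s = opt_list g @ r \<Longrightarrow> w' = opt_list a @ w \<Longrightarrow>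
   m' = pda_val A (p, a, g, q, h) * m \<Longrightarrow>
   pda_run A (p, s) w' m' c"
  using pda_step by blast

lemma nfa_run_stepI:
  "(p, a, q) \<in> nfa_delta A \<Longrightarrow> nfa_run mult one A q w m r \<Longrightarrow>
   w' = opt_list a @ w \<Longrightarrow> m' = mult (nfa_val A (p, a, q)) m \<Longrightarrow>
   nfa_run mult one A p w' m' r"
  by (simp add: nfa_step)

definition list_of_set :: "'b set \<Rightarrow> 'b list" where
  "list_of_set S = (SOME l. set l = S)"

lemma set_list_of_set: "finite S \<Longrightarrow> set (list_of_set S) = S"
  unfolding list_of_set_def by (rule someI_ex) (rule finite_list)

text \<open>Both simulations rename the states of the given automaton and add auxiliary states
indexed by a transition and a position in the chain replacing it.\<close>

definition base_state :: "nat \<Rightarrow> nat" where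
  "base_state p = prod_encode (0, p)"

definition aux_state :: "nat \<Rightarrow> nat \<Rightarrow> nat" where
  "aux_state i j = prod_encode (Suc i, j)"

section \<open>Valence automata over P_2 \<times> M are valence pushdown automata over M\<close>

text \<open>A bit string x is kept on the stack as the symbols 0/1, last letter on top.\<close>

definition bit_stack :: "bool list \<Rightarrow> nat list" where
  "bit_stack x = map of_bool (rev x)"

definition stack_bits :: "nat list \<Rightarrow> bool list" where
  "stack_bits s = map (\<lambda>n. n \<noteq> 0) (rev s)"

definition pop_sym :: "bool \<times> bool \<Rightarrow> nat option" where
  "pop_sym g = (if fst g then None else Some (of_bool (snd g)))"

definition push_sym :: "bool \<times> bool \<Rightarrow> nat option" where
  "push_sym g = (if fst g then Some (of_bool (snd g)) else None)"

lemma polygen_imp_stack_step: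
  assumes "polygen g x = Some y"
  shows "\<exists>r. bit_stack x = opt_list (pop_sym g) @ r \<and> bit_stack y = opt_list (push_sym g) @ r"
proof (cases "fst g")
  case True
  then show ?thesis using assms
    by (auto simp: polygen_def Pgen_def bit_stack_def pop_sym_def push_sym_def opt_list_def)
next
  case False
  then show ?thesis using assms
    by (auto simp: polygen_def Qgen_eq_Some_iff bit_stack_def pop_sym_def push_sym_def opt_list_def)
qed

lemma polygen_stack_bits:
  "polygen g (stack_bits (opt_list (pop_sym g) @ r)) = Some (stack_bits (opt_list (push_sym g) @ r))"
  by (cases g) (auto simp: polygen_def Pgen_def Qgen_def stack_bits_def pop_sym_def push_sym_def
      opt_list_def)

locale vnfa_to_vpda =
  fixes A :: "('a, pfun \<times> 'm::monoid_mult) vnfa"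
  assumes wf: "vnfa_wf (P2 \<times> UNIV) A"
begin

definition ts :: "'a nfa_trans list" where
  "ts = list_of_set (nfa_delta A)"

definition src :: "nat \<Rightarrow> nat" where "src i = fst (ts ! i)"
definition lbl :: "nat \<Rightarrow> 'a option" where "lbl i = fst (snd (ts ! i))"
definition tgt :: "nat \<Rightarrow> nat" where "tgt i = snd (snd (ts ! i))"

lemma set_ts: "set ts = nfa_delta A"
  using wf by (simp add: ts_def vnfa_wf_def set_list_of_set)

lemma ts_nth: "ts ! i = (src i, lbl i, tgt i)"
  by (simp add: src_def lbl_def tgt_def)

lemma ts_nth_in_delta: "i < length ts \<Longrightarrow> (src i, lbl i, tgt i) \<in> nfa_delta A"
  by (metis nth_mem set_ts ts_nth)

lemma delta_imp_ts_index:
  "(p, a, q) \<in> nfa_delta A \<Longrightarrow> \<exists>i < length ts. src i = p \<and> lbl i = a \<and> tgt i = q"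
  unfolding set_ts[symmetric] in_set_conv_nth by (auto simp: ts_nth)

definition ops :: "nat \<Rightarrow> (bool \<times> bool) list" where
  "ops i = (SOME gs. polyword gs = fst (nfa_val A (ts ! i)))"

lemma polyword_ops: "i < length ts \<Longrightarrow> polyword (ops i) = fst (nfa_val A (ts ! i))"
proof -
  assume "i < length ts"
  then have "fst (nfa_val A (ts ! i)) \<in> P2"
    using wf set_ts nth_mem by (fastforce simp: vnfa_wf_def)
  then show ?thesis
    unfolding ops_def by (metis (mono_tags) P2_imp_polyword someI_ex)
qed

definition enter_trans :: "nat \<Rightarrow> 'a pda_trans" where
  "enter_trans i = (base_state (src i), lbl i, None, aux_state i 0, None)"

definition op_trans :: "nat \<Rightarrow> nat \<Rightarrow> 'a pda_trans" where
  "op_trans i j = (aux_state i j, None, pop_sym (ops i ! j), aux_state i (Suc j), push_sym (ops i ! j))"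

definition leave_trans :: "nat \<Rightarrow> 'a pda_trans" where
  "leave_trans i = (aux_state i (length (ops i)), None, None, base_state (tgt i), None)"

text \<open>The M-component of transition i is carried by the transition entering aux_state i 0,
the only one with that target.\<close>

definition sim_val :: "'a pda_trans \<Rightarrow> 'm" where
  "sim_val t = (case prod_decode (fst (snd (snd (snd t)))) of
                  (Suc i, 0) \<Rightarrow> snd (nfa_val A (ts ! i))
                | _ \<Rightarrow> 1)"

definition sim_vpda :: "('a, 'm) vpda" where
  "sim_vpda =
     \<lparr>pda_states = base_state ` nfa_states A \<union> (\<Union>i<length ts. aux_state i ` {..length (ops i)}),
      pda_delta = (\<Union>i<length ts. {enter_trans i, leave_trans i} \<union> op_trans i ` {..<length (ops i)}),
      pda_val = sim_val,
      pda_init = base_state (nfa_init A),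
      pda_acc = base_state ` nfa_acc A\<rparr>"

lemma sim_val_into_aux_state_0 [simp]: "sim_val (p, a, g, aux_state i 0, h) = snd (nfa_val A (ts ! i))"
  and sim_val_into_aux_state_Suc [simp]: "sim_val (p, a, g, aux_state i (Suc j), h) = 1"
  and sim_val_into_base_state [simp]: "sim_val (p, a, g, base_state q, h) = 1"
  by (simp_all add: sim_val_def aux_state_def base_state_def)

lemma pda_val_sim_vpda [simp]: "pda_val sim_vpda = sim_val"
  by (simp add: sim_vpda_def)

lemma pda_delta_sim_vpda:
  "pda_delta sim_vpda =
     (\<Union>i<length ts. {enter_trans i, leave_trans i} \<union> op_trans i ` {..<length (ops i)})"
  by (simp add: sim_vpda_def)

lemma sim_vpda_wf: "vpda_wf sim_vpda"
proof -
  have ends: "src i \<in> nfa_states A \<and> tgt i \<in> nfa_states A" if "i < length ts" for i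
    using wf ts_nth_in_delta[OF that] by (fastforce simp: vnfa_wf_def)
  have aux: "aux_state i j \<in> pda_states sim_vpda" if "i < length ts" "j \<le> length (ops i)" for i j
    using that unfolding sim_vpda_def by auto
  have base: "base_state p \<in> pda_states sim_vpda" if "p \<in> nfa_states A" for p
    using that unfolding sim_vpda_def by auto
  have "\<forall>(p, a, g, q, h) \<in> pda_delta sim_vpda. p \<in> pda_states sim_vpda \<and> q \<in> pda_states sim_vpda"
    unfolding pda_delta_sim_vpda by (auto simp: enter_trans_def op_trans_def leave_trans_def
        intro!: aux base dest: ends)
  then show ?thesis
    using wf by (auto simp: vpda_wf_def vnfa_wf_def sim_vpda_def)
qed

lemma pda_run_through_chain:
  assumes "i < length ts" and "j \<le> length (ops i)" and "polyword (drop j (ops i)) x = Some z"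
    and "pda_run sim_vpda (base_state (tgt i), bit_stack z) w m c"
  shows "pda_run sim_vpda (aux_state i j, bit_stack x) w m c"
  using assms(2,3)
proof (induction "length (ops i) - j" arbitrary: j x)
  case 0
  then have j: "j = length (ops i)" and "x = z" by simp_all
  have "leave_trans i \<in> pda_delta sim_vpda"
    using assms(1) unfolding sim_vpda_def by auto
  then show ?case
    unfolding j \<open>x = z\<close> leave_trans_def
    by (rule pda_run_stepI[OF _ assms(4), where r = "bit_stack z"]) (simp_all add: opt_list_def)
next
  case (Suc n)
  then have j: "j < length (ops i)" by simp
  then have "drop j (ops i) = ops i ! j # drop (Suc j) (ops i)"
    by (simp add: Cons_nth_drop_Suc)
  with Suc.prems obtain y where y: "polygen (ops i ! j) x = Some y"
    "polyword (drop (Suc j) (ops i)) y = Some z"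
    by (auto simp: pmul_eq_Some_iff)
  have run: "pda_run sim_vpda (aux_state i (Suc j), bit_stack y) w m c"
    using Suc j y by simp
  obtain r where r: "bit_stack x = opt_list (pop_sym (ops i ! j)) @ r"
    "bit_stack y = opt_list (push_sym (ops i ! j)) @ r"
    using polygen_imp_stack_step[OF y(1)] by blast
  have "op_trans i j \<in> pda_delta sim_vpda"
    using assms(1) j by (auto simp: sim_vpda_def)
  then show ?case
    unfolding op_trans_def
    by (rule pda_run_stepI[OF _ run, where r = r]) (simp_all add: r opt_list_def)
qed

lemma vpda_run_of_vnfa_run:
  "nfa_run prodmul (Some, 1) A p w v q \<Longrightarrow> fst v x = Some y \<Longrightarrow>
   pda_run sim_vpda (base_state p, bit_stack x) w (snd v) (base_state q, bit_stack y)"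
proof (induction arbitrary: x y rule: nfa_run.induct)
  case (nfa_refl p)
  then show ?case by (simp add: pda_refl)
next
  case (nfa_step p a q w m r)
  obtain i where i: "i < length ts" "src i = p" "lbl i = a" "tgt i = q"
    using delta_imp_ts_index[OF nfa_step.hyps(1)] by blast
  from nfa_step.prems obtain z where z: "fst (nfa_val A (p, a, q)) x = Some z" "fst m z = Some y"
    by (auto simp: prodmul_def pmul_eq_Some_iff)
  have "polyword (drop 0 (ops i)) x = Some z"
    using polyword_ops[OF i(1)] i z(1) by (simp add: ts_nth)
  then have run: "pda_run sim_vpda (aux_state i 0, bit_stack x) w (snd m) (base_state r, bit_stack y)"
    using pda_run_through_chain[OF i(1) le0] nfa_step.IH[OF z(2)] i(4) by blast
  have "enter_trans i \<in> pda_delta sim_vpda"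
    using i(1) by (auto simp: sim_vpda_def)
  then have "pda_run sim_vpda (base_state (src i), bit_stack x) (opt_list (lbl i) @ w)
      (snd (nfa_val A (ts ! i)) * snd m) (base_state r, bit_stack y)"
    unfolding enter_trans_def
    by (rule pda_run_stepI[OF _ run, where r = "bit_stack x"])
       (simp_all add: opt_list_def)
  then show ?case
    using i by (simp add: prodmul_def ts_nth)
qed

text \<open>A configuration in the chain of transition i at position j stands for the
A-configuration in state tgt i whose P_2-valence still has to absorb the rest of ops i.\<close>

definition resume :: "nat \<Rightarrow> nat" where
  "resume x = (case prod_decode x of (0, p) \<Rightarrow> p | (Suc i, _) \<Rightarrow> tgt i)"

definition pending :: "nat \<Rightarrow> pfun" where
  "pending x = (case prod_decode x of (0, _) \<Rightarrow> Some | (Suc i, j) \<Rightarrow> polyword (drop j (ops i)))"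

lemma resume_base_state [simp]: "resume (base_state p) = p"
  and pending_base_state [simp]: "pending (base_state p) = Some"
  and resume_aux_state [simp]: "resume (aux_state i j) = tgt i"
  and pending_aux_state [simp]: "pending (aux_state i j) = polyword (drop j (ops i))"
  by (simp_all add: resume_def pending_def base_state_def aux_state_def)

lemma vnfa_run_of_vpda_run:
  "pda_run sim_vpda c w m c' \<Longrightarrow> fst c' = base_state q \<Longrightarrow>
   \<exists>f. nfa_run prodmul (Some, 1) A (resume (fst c)) w (f, m) q \<and>
       pmul (pending (fst c)) f (stack_bits (snd c)) = Some (stack_bits (snd c'))"
proof (induction rule: pda_run.induct)
  case (pda_refl c)
  then show ?case by (auto intro: nfa_refl)
next
  case (pda_step x a g y h r w m c)
  then obtain f where f: "nfa_run prodmul (Some, 1) A (resume y) w (f, m) q"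
    "pmul (pending y) f (stack_bits (opt_list h @ r)) = Some (stack_bits (snd c))"
    by auto
  from pda_step.hyps(1) consider (enter) i where "i < length ts" "(x, a, g, y, h) = enter_trans i"
    | (op) i j where "i < length ts" "j < length (ops i)" "(x, a, g, y, h) = op_trans i j"
    | (leave) i where "i < length ts" "(x, a, g, y, h) = leave_trans i"
    unfolding pda_delta_sim_vpda by blast
  then show ?case
  proof cases
    case enter
    then have trans: "(resume x, a, resume y) \<in> nfa_delta A"
      and val: "prodmul (nfa_val A (resume x, a, resume y)) (f, m)
                  = (pmul (polyword (ops i)) f, sim_val (x, a, g, y, h) * m)"
      by (auto simp: enter_trans_def ts_nth_in_delta prodmul_def polyword_ops ts_nth)
    from nfa_run_stepI[OF trans f(1) refl refl] show ?thesis
      using enter f(2) unfolding val by (auto simp: enter_trans_def opt_list_def pmul_assoc)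
  next
    case op
    then have "polyword (drop j (ops i)) = pmul (polygen (ops i ! j)) (polyword (drop (Suc j) (ops i)))"
      by (simp flip: Cons_nth_drop_Suc)
    then show ?thesis
      using op f polygen_stack_bits[of "ops i ! j" r]
      by (auto simp: op_trans_def opt_list_def pmul_apply)
  next
    case leave
    then show ?thesis
      using f by (auto simp: leave_trans_def opt_list_def)
  qed
qed

lemma vpda_lang_sim_vpda: "vpda_lang sim_vpda = vnfa_lang prodmul (Some, 1) A"
proof (intro set_eqI iffI)
  fix w assume "w \<in> vpda_lang sim_vpda"
  then obtain q where q: "q \<in> nfa_acc A"
      "pda_run sim_vpda (base_state (nfa_init A), []) w 1 (base_state q, [])"
    unfolding vpda_lang_def by (auto simp: sim_vpda_def)
  from vnfa_run_of_vpda_run[OF q(2)] obtain f where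
    f: "nfa_run prodmul (Some, 1) A (nfa_init A) w (f, 1) q" "f [] = Some []"
    by (auto simp: stack_bits_def)
  have "f = Some"
    using nfa_run_valence_in_P2[OF wf f(1)] f(2) by (simp add: P2_eq_Some_if_Nil)
  then show "w \<in> vnfa_lang prodmul (Some, 1) A"
    using f q(1) unfolding vnfa_lang_def by auto
next
  fix w assume "w \<in> vnfa_lang prodmul (Some, 1) A"
  then obtain q where "q \<in> nfa_acc A" "nfa_run prodmul (Some, 1) A (nfa_init A) w (Some, 1) q"
    unfolding vnfa_lang_def by blast
  with vpda_run_of_vnfa_run[of _ w "(Some, 1)" q "[]" "[]"]
  show "w \<in> vpda_lang sim_vpda"
    unfolding vpda_lang_def by (auto simp: sim_vpda_def bit_stack_def)
qed

end

section \<open>Valence pushdown automata over M are valence automata over P_2 \<times> M\<close>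

definition code :: "nat \<Rightarrow> bool list" where
  "code n = False # replicate n True"

definition stack_code :: "nat list \<Rightarrow> bool list" where
  "stack_code s = concat (map code (rev s))"

lemma stack_code_Nil [simp]: "stack_code [] = []"
  and stack_code_Cons [simp]: "stack_code (n # s) = stack_code s @ code n"
  by (simp_all add: stack_code_def)

lemma stack_code_eq_Nil_iff [simp]: "stack_code s = [] \<longleftrightarrow> s = []"
  by (cases s) (auto simp: code_def)

lemma replicate_True_Cons_False_inject:
  "replicate a True @ False # xs = replicate b True @ False # ys \<Longrightarrow> a = b \<and> xs = ys"
proof (induction a arbitrary: b)
  case 0
  then show ?case by (cases b) auto
next
  case (Suc a)
  then show ?case by (cases b) auto
qed

lemma append_code_inject:
  assumes "xs @ code a = ys @ code b"
  shows "a = b \<and> xs = ys"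
proof -
  have "rev (xs @ code a) = rev (ys @ code b)"
    using assms by simp
  then have "replicate a True @ False # rev xs = replicate b True @ False # rev ys"
    by (simp add: code_def)
  then show ?thesis
    by (auto dest: replicate_True_Cons_False_inject)
qed

lemma stack_code_eq_append_code:
  assumes "stack_code s = z @ code n"
  shows "\<exists>r. s = n # r \<and> z = stack_code r"
proof (cases s)
  case Nil
  with assms show ?thesis by (simp add: code_def)
next
  case (Cons m r)
  with assms append_code_inject[of "stack_code r" m z n] show ?thesis by auto
qed

definition push_code :: "nat option \<Rightarrow> pfun" where
  "push_code h = (case h of None \<Rightarrow> Some | Some n \<Rightarrow> polyword (map (Pair True) (code n)))"

definition pop_code :: "nat option \<Rightarrow> pfun" where
  "pop_code g = (case g of None \<Rightarrow> Some | Some n \<Rightarrow> polyword (map (Pair False) (rev (code n))))"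

definition stack_op :: "nat option \<Rightarrow> nat option \<Rightarrow> pfun" where
  "stack_op g h = pmul (pop_code g) (push_code h)"

lemma stack_op_in_P2: "stack_op g h \<in> P2"
  by (cases g; cases h) (simp_all add: stack_op_def pop_code_def push_code_def polyword_in_P2
      P2_pmul_closed P2_one)

lemma pop_code_apply: "pop_code g (u @ stack_code (opt_list g @ r)) = Some (u @ stack_code r)"
  by (cases g) (simp_all add: pop_code_def opt_list_def polyword_pop_eq_Some_iff)

lemma push_code_apply: "push_code h (u @ stack_code r) = Some (u @ stack_code (opt_list h @ r))"
  by (cases h) (simp_all add: push_code_def opt_list_def polyword_push)

lemma stack_op_apply:
  "stack_op g h (u @ stack_code (opt_list g @ r)) = Some (u @ stack_code (opt_list h @ r))"
  by (simp add: stack_op_def pmul_apply pop_code_apply push_code_apply)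

lemma stack_op_eq_SomeD:
  assumes "stack_op g h (stack_code s) = Some z"
  shows "\<exists>r. s = opt_list g @ r \<and> z = stack_code (opt_list h @ r)"
proof -
  obtain z0 where z0: "pop_code g (stack_code s) = Some z0" "push_code h z0 = Some z"
    using assms by (auto simp: stack_op_def pmul_eq_Some_iff)
  obtain r where "s = opt_list g @ r" "z0 = stack_code r"
  proof (cases g)
    case None
    then show ?thesis using that z0 by (simp add: pop_code_def opt_list_def)
  next
    case (Some n)
    then show ?thesis
      using that z0 stack_code_eq_append_code
      by (fastforce simp: pop_code_def polyword_pop_eq_Some_iff opt_list_def)
  qed
  then show ?thesis
    using z0(2) by (cases h) (auto simp: push_code_def polyword_push opt_list_def)
qed

locale vpda_to_vnfa =
  fixes A :: "('a, 'm::monoid_mult) vpda"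
  assumes wf: "vpda_wf A"
begin

definition ts :: "'a pda_trans list" where
  "ts = list_of_set (pda_delta A)"

definition src :: "nat \<Rightarrow> nat" where "src i = fst (ts ! i)"
definition lbl :: "nat \<Rightarrow> 'a option" where "lbl i = fst (snd (ts ! i))"
definition popped :: "nat \<Rightarrow> nat option" where "popped i = fst (snd (snd (ts ! i)))"
definition tgt :: "nat \<Rightarrow> nat" where "tgt i = fst (snd (snd (snd (ts ! i))))"
definition pushed :: "nat \<Rightarrow> nat option" where "pushed i = snd (snd (snd (snd (ts ! i))))"

lemma set_ts: "set ts = pda_delta A"
  using wf by (simp add: ts_def vpda_wf_def set_list_of_set)

lemma ts_nth: "ts ! i = (src i, lbl i, popped i, tgt i, pushed i)"
  by (simp add: src_def lbl_def popped_def tgt_def pushed_def)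

lemma ts_nth_in_delta:
  "i < length ts \<Longrightarrow> (src i, lbl i, popped i, tgt i, pushed i) \<in> pda_delta A"
  by (metis nth_mem set_ts ts_nth)

lemma delta_imp_ts_index:
  "(p, a, g, q, h) \<in> pda_delta A \<Longrightarrow>
   \<exists>i < length ts. src i = p \<and> lbl i = a \<and> popped i = g \<and> tgt i = q \<and> pushed i = h"
  unfolding set_ts[symmetric] in_set_conv_nth by (auto simp: ts_nth)

text \<open>Transition i is split at the new state aux_state i 0: an NFA valence is a function
of source, label and target, which need not determine the PDA transition.\<close>

definition sim_val :: "'a nfa_trans \<Rightarrow> pfun \<times> 'm" where
  "sim_val t = (case prod_decode (snd (snd t)) of
                  (Suc i, _) \<Rightarrow> (stack_op (popped i) (pushed i), pda_val A (ts ! i))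
                | _ \<Rightarrow> (Some, 1))"

definition sim_vnfa :: "('a, pfun \<times> 'm) vnfa" where
  "sim_vnfa =
     \<lparr>nfa_states = base_state ` pda_states A \<union> (\<lambda>i. aux_state i 0) ` {..<length ts},
      nfa_delta = (\<Union>i<length ts. {(base_state (src i), lbl i, aux_state i 0),
                                     (aux_state i 0, None, base_state (tgt i))}),
      nfa_val = sim_val,
      nfa_init = base_state (pda_init A),
      nfa_acc = base_state ` pda_acc A\<rparr>"

lemma sim_val_into_aux_state [simp]:
    "sim_val (p, a, aux_state i j) = (stack_op (popped i) (pushed i), pda_val A (ts ! i))"
  and sim_val_into_base_state [simp]: "sim_val (p, a, base_state q) = (Some, 1)"
  by (simp_all add: sim_val_def aux_state_def base_state_def)

lemma nfa_val_sim_vnfa [simp]: "nfa_val sim_vnfa = sim_val"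
  by (simp add: sim_vnfa_def)

lemma nfa_delta_sim_vnfa:
  "nfa_delta sim_vnfa = (\<Union>i<length ts. {(base_state (src i), lbl i, aux_state i 0),
                                            (aux_state i 0, None, base_state (tgt i))})"
  by (simp add: sim_vnfa_def)

lemma sim_vnfa_wf: "vnfa_wf (P2 \<times> UNIV) sim_vnfa"
proof -
  have ends: "src i \<in> pda_states A \<and> tgt i \<in> pda_states A" if "i < length ts" for i
    using wf ts_nth_in_delta[OF that] by (fastforce simp: vpda_wf_def)
  have "\<forall>(p, a, q) \<in> nfa_delta sim_vnfa. p \<in> nfa_states sim_vnfa \<and> q \<in> nfa_states sim_vnfa"
    unfolding nfa_delta_sim_vnfa by (auto simp: sim_vnfa_def dest: ends)
  moreover have "\<forall>t \<in> nfa_delta sim_vnfa. nfa_val sim_vnfa t \<in> P2 \<times> UNIV"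
    unfolding nfa_delta_sim_vnfa by (auto simp: stack_op_in_P2 P2_one)
  ultimately show ?thesis
    using wf by (simp add: vnfa_wf_def vpda_wf_def) (auto simp: sim_vnfa_def)
qed

lemma vnfa_run_of_vpda_run:
  "pda_run A c w m c' \<Longrightarrow>
   \<exists>f. nfa_run prodmul (Some, 1) sim_vnfa (base_state (fst c)) w (f, m) (base_state (fst c')) \<and>
       (\<forall>u. f (u @ stack_code (snd c)) = Some (u @ stack_code (snd c')))"
proof (induction rule: pda_run.induct)
  case (pda_refl c)
  show ?case by (auto intro: nfa_refl)
next
  case (pda_step p a g q h r w m c)
  then obtain f where f: "nfa_run prodmul (Some, 1) sim_vnfa (base_state q) w (f, m) (base_state (fst c))"
    "\<forall>u. f (u @ stack_code (opt_list h @ r)) = Some (u @ stack_code (snd c))"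
    by auto
  obtain i where i: "i < length ts" "src i = p" "lbl i = a" "popped i = g" "tgt i = q" "pushed i = h"
    using delta_imp_ts_index[OF pda_step.hyps(1)] by blast
  have leave: "(aux_state i 0, None, base_state q) \<in> nfa_delta sim_vnfa"
    and enter: "(base_state p, a, aux_state i 0) \<in> nfa_delta sim_vnfa"
    using i unfolding nfa_delta_sim_vnfa by blast+
  have "nfa_run prodmul (Some, 1) sim_vnfa (aux_state i 0) w (f, m) (base_state (fst c))"
    by (rule nfa_run_stepI[OF leave f(1)]) (simp_all add: opt_list_def prodmul_def)
  then have "nfa_run prodmul (Some, 1) sim_vnfa (base_state p) (opt_list a @ w)
      (pmul (stack_op g h) f, pda_val A (p, a, g, q, h) * m) (base_state (fst c))"
    by (rule nfa_run_stepI[OF enter]) (simp_all add: prodmul_def ts_nth i)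
  moreover have
    "\<forall>u. pmul (stack_op g h) f (u @ stack_code (opt_list g @ r)) = Some (u @ stack_code (snd c))"
    using f(2) by (simp add: pmul_apply stack_op_apply)
  ultimately show ?case by auto
qed

text \<open>The whole valence of transition i is paid on entering aux_state i 0, which therefore
stands for the A-state tgt i.\<close>

definition resume :: "nat \<Rightarrow> nat" where
  "resume x = (case prod_decode x of (0, p) \<Rightarrow> p | (Suc i, _) \<Rightarrow> tgt i)"

lemma resume_base_state [simp]: "resume (base_state p) = p"
  and resume_aux_state [simp]: "resume (aux_state i j) = tgt i"
  by (simp_all add: resume_def base_state_def aux_state_def)

lemma vpda_run_of_vnfa_run:
  "nfa_run prodmul (Some, 1) sim_vnfa x w v y \<Longrightarrow> y = base_state q \<Longrightarrow>
   fst v (stack_code s) = Some [] \<Longrightarrow> pda_run A (resume x, s) w (snd v) (q, [])"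
proof (induction arbitrary: s rule: nfa_run.induct)
  case (nfa_refl x)
  then show ?case by (auto intro: pda_refl)
next
  case (nfa_step x a y w v' z)
  from nfa_step.hyps(1) consider (enter) i where "i < length ts"
      "x = base_state (src i)" "a = lbl i" "y = aux_state i 0"
    | (leave) i where "x = aux_state i 0" "a = None" "y = base_state (tgt i)"
    unfolding nfa_delta_sim_vnfa by blast
  then show ?case
  proof cases
    case enter
    obtain s' where s': "stack_op (popped i) (pushed i) (stack_code s) = Some s'" "fst v' s' = Some []"
      using nfa_step.prems(2) enter by (auto simp: prodmul_def pmul_eq_Some_iff)
    obtain r where r: "s = opt_list (popped i) @ r" "s' = stack_code (opt_list (pushed i) @ r)"
      using stack_op_eq_SomeD[OF s'(1)] by blast
    have "pda_run A (tgt i, opt_list (pushed i) @ r) w (snd v') (q, [])"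
      using nfa_step.IH[OF nfa_step.prems(1)] s'(2) r(2) enter by simp
    from pda_run_stepI[OF ts_nth_in_delta[OF enter(1)] this refl r(1) refl refl]
    show ?thesis
      using enter by (simp add: prodmul_def ts_nth)
  next
    case leave
    then show ?thesis
      using nfa_step by (simp add: prodmul_def opt_list_def)
  qed
qed

lemma vnfa_lang_sim_vnfa: "vnfa_lang prodmul (Some, 1) sim_vnfa = vpda_lang A"
proof (intro set_eqI iffI)
  fix w assume "w \<in> vnfa_lang prodmul (Some, 1) sim_vnfa"
  then obtain q where "q \<in> pda_acc A"
    "nfa_run prodmul (Some, 1) sim_vnfa (base_state (pda_init A)) w (Some, 1) (base_state q)"
    unfolding vnfa_lang_def by (auto simp: sim_vnfa_def)
  with vpda_run_of_vnfa_run[of _ w "(Some, 1)" _ q "[]"]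
  show "w \<in> vpda_lang A"
    unfolding vpda_lang_def by fastforce
next
  fix w assume "w \<in> vpda_lang A"
  then obtain q where q: "q \<in> pda_acc A" "pda_run A (pda_init A, []) w 1 (q, [])"
    unfolding vpda_lang_def by blast
  obtain f where f: "nfa_run prodmul (Some, 1) sim_vnfa (base_state (pda_init A)) w (f, 1) (base_state q)"
    "\<forall>u. f u = Some u"
    using vnfa_run_of_vpda_run[OF q(2)] by auto
  then have "f = Some"
    by (simp add: fun_eq_iff)
  with f q(1) show "w \<in> vnfa_lang prodmul (Some, 1) sim_vnfa"
    unfolding vnfa_lang_def by (auto simp: sim_vnfa_def)
qed

end

lemma vpda_langs_subset_vnfa_langs:
  "(vpda_langs TYPE('m::monoid_mult) :: 'a list set set)
     \<subseteq> vnfa_langs (P2 \<times> (UNIV :: 'm set)) prodmul (Some, 1)"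
proof
  fix L :: "'a list set"
  assume "L \<in> vpda_langs TYPE('m)"
  then obtain A :: "('a, 'm) vpda" where "vpda_wf A" "L = vpda_lang A"
    unfolding vpda_langs_def by blast
  then interpret vpda_to_vnfa A
    by unfold_locales
  show "L \<in> vnfa_langs (P2 \<times> (UNIV :: 'm set)) prodmul (Some, 1)"
    unfolding vnfa_langs_def using sim_vnfa_wf vnfa_lang_sim_vnfa \<open>L = vpda_lang A\<close> by blast
qed

lemma vnfa_langs_subset_vpda_langs:
  "vnfa_langs (P2 \<times> (UNIV :: 'm::monoid_mult set)) prodmul (Some, 1)
     \<subseteq> (vpda_langs TYPE('m) :: 'a list set set)"
proof
  fix L :: "'a list set"
  assume "L \<in> vnfa_langs (P2 \<times> (UNIV :: 'm set)) prodmul (Some, 1)"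
  then obtain A :: "('a, pfun \<times> 'm) vnfa" where "vnfa_wf (P2 \<times> UNIV) A"
      "L = vnfa_lang prodmul (Some, 1) A"
    unfolding vnfa_langs_def by blast
  then interpret vnfa_to_vpda A
    by unfold_locales
  show "L \<in> vpda_langs TYPE('m)"
    unfolding vpda_langs_def using sim_vpda_wf vpda_lang_sim_vpda \<open>L = vnfa_lang _ _ A\<close> by blast
qed

theorem theorem1:
  "(vpda_langs TYPE('m::monoid_mult) :: 'a list set set)
     = vnfa_langs (P2 \<times> (UNIV :: 'm set)) prodmul (Some, 1)"
  using vpda_langs_subset_vnfa_langs vnfa_langs_subset_vpda_langs by (rule equalityI)

end
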